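(* In the setting of an iteration $t$ of the NSGA-II optimizing \textsc{OneMinMax}, with crowding distances computed with respect to $R_t$, let $v_1^{\min},v_1^{\max}$, $V$, $V^+_{\mathrm{in}}$, $V^-_{\mathrm{in}}$ be as defined below and assume $v_1^{\max}>v_1^{\min}$. Then for every $(v_1,v_2)\in V^+_{\mathrm{in}}\cap V^-_{\mathrm{in}}$, there are at most two individuals $x\in R_t$ with $f(x)=(v_1,v_2)$ and $\mathrm{cDis}(x)\ge\frac{2}{v_1^{\max}-v_1^{\min}}$ (regardless of how ties are broken in the sorting steps).
   Context: Search space $\{0,1\}^n$; objective $f=(f_1,f_2)$, both maximized. Populations are multisets of bit strings. Crowding distance of the individuals of a set $S$ (computed with respect to $S$): start with $\mathrm{cDis}(x)=0$ for all $x\in S$; for each $i\in\{1,2\}$, sort $S$ in ascending $f_i$-value as $S_{i.1},\dots,S_{i.|S|}$ (ties broken arbitrarily), set $\mathrm{cDis}(S_{i.1})=\mathrm{cDis}(S_{i.|S|})=+\infty$, and for $2\le j\le |S|-1$ add $\frac{f_i(S_{i.j+1})-f_i(S_{i.j-1})}{f_i(S_{i.|S|})-f_i(S_{i.1})}$ to $\mathrm{cDis}(S_{i.j})$. In the NSGA-II, $R_t=P_t\cup Q_t$ is the multiset union of the parent population $P_t$ and offspring population $Q_t$ of iteration $t$, each of size $N$. \textsc{OneMinMax}: $f(x)=(n-\sum_i x_i,\ \sum_i x_i)$. Notation: $v_1^{\min}=\min\{f_1(x):x\in R_t\}$, $v_1^{\max}=\max\{f_1(x):x\in R_t\}$, $V=f(R_t)=\{f(x):x\in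 R_t\}$, $V^+_{\mathrm{in}}=\{(v_1,v_2)\in V:\exists y\in R_t,\ f(y)=(v_1+1,v_2-1)\}$, $V^-_{\mathrm{in}}=\{(v_1,v_2)\in V:\exists y\in R_t,\ f(y)=(v_1-1,v_2+1)\}$. *)

theory Defs
  imports Complex_Main "HOL-Library.Extended_Real"
begin

text \<open>Bit strings are boolean lists of length n. OneMinMax, with values in int
  so that v1+1, v2-1 are unproblematic.\<close>
definition omm :: "nat \<Rightarrow> bool list \<Rightarrow> int \<times> int" where
  "omm n x = (int n - int (count_list x True), int (count_list x True))"

text \<open>A multiset S of individuals is represented by a list; individuals are
  identified by their index in the list.\<close>
definition sorted_perm :: "('a \<Rightarrow> real) \<Rightarrow> 'a list \<Rightarrow> (nat \<Rightarrow> nat) \<Rightarrow> bool" where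
  "sorted_perm g S \<sigma> \<longleftrightarrow>
     bij_betw \<sigma> {..<length S} {..<length S} \<and>
     (\<forall>j k. j \<le> k \<and> k < length S \<longrightarrow> g (S ! \<sigma> j) \<le> g (S ! \<sigma> k))"

definition cdis_obj :: "('a \<Rightarrow> real) \<Rightarrow> 'a list \<Rightarrow> (nat \<Rightarrow> nat) \<Rightarrow> nat \<Rightarrow> ereal" where
  "cdis_obj g S \<sigma> x =
     (if \<sigma> 0 = x \<or> \<sigma> (length S - 1) = x then \<infinity>
      else ereal (\<Sum>j\<in>{1..<length S - 1}.
             if \<sigma> j = x then
               (g (S ! \<sigma> (Suc j)) - g (S ! \<sigma> (j - 1))) /
               (g (S ! \<sigma> (length S - 1)) - g (S ! \<sigma> 0))
             else 0))"

definition cDis :: "('a \<Rightarrow> real) \<Rightarrow> ('a \<Rightarrow> real) \<Rightarrow> 'a list \<Rightarrow> (nat \<Rightarrow> nat) \<Rightarrow> (nat \<Rightarrow> nat) \<Rightarrow> nat \<Rightarrow> ereal" where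
  "cDis g1 g2 S \<sigma>1 \<sigma>2 x = cdis_obj g1 S \<sigma>1 x + cdis_obj g2 S \<sigma>2 x"

definition v1min :: "nat \<Rightarrow> bool list list \<Rightarrow> int" where
  "v1min n R = Min ((\<lambda>x. fst (omm n x)) ` set R)"

definition v1max :: "nat \<Rightarrow> bool list list \<Rightarrow> int" where
  "v1max n R = Max ((\<lambda>x. fst (omm n x)) ` set R)"

definition Vset :: "nat \<Rightarrow> bool list list \<Rightarrow> (int \<times> int) set" where
  "Vset n R = omm n ` set R"

definition Vin_plus :: "nat \<Rightarrow> bool list list \<Rightarrow> (int \<times> int) set" where
  "Vin_plus n R = {(v1, v2) \<in> Vset n R. \<exists>y \<in> set R. omm n y = (v1 + 1, v2 - 1)}"

definition Vin_minus :: "nat \<Rightarrow> bool list list \<Rightarrow> (int \<times> int) set" where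
  "Vin_minus n R = {(v1, v2) \<in> Vset n R. \<exists>y \<in> set R. omm n y = (v1 - 1, v2 + 1)}"

end

theory Submission
  imports Defs
begin

text \<open>Fix one objective and an individual of value v such that the values v + 1 and v - 1 both
  occur. In any sorted order it lies strictly inside, and its two sorted neighbours have values
  within distance one of v, so its crowding contribution is (number of value gaps next to it)
  divided by the objective's range. For OneMinMax the second objective is n minus the first, so
  both ranges equal v1max - v1min, and an individual needs at least two gaps to reach the
  threshold. But among all individuals of value v only the last one of the block has a gap after
  it and only the first one has a gap before it, giving at most four gaps over both objectives,
  hence at most two such individuals.\<close>

lemma Max_image_diff_left:
  fixes f :: "'a \<Rightarrow> 'b::linordered_ab_group_add"
  assumes "finite A" "A \<noteq> {}"
  shows "Max ((\<lambda>x. c - f x) ` A) = c - Min (f ` A)"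
proof (rule Max_eqI)
  show "finite ((\<lambda>x. c - f x) ` A)" using assms(1) by simp
  show "y \<le> c - Min (f ` A)" if "y \<in> (\<lambda>x. c - f x) ` A" for y
    using that assms(1) by (auto intro: diff_left_mono)
  have "Min (f ` A) \<in> f ` A" using assms by simp
  then show "c - Min (f ` A) \<in> (\<lambda>x. c - f x) ` A" by auto
qed

lemma Min_image_diff_left:
  fixes f :: "'a \<Rightarrow> 'b::linordered_ab_group_add"
  assumes "finite A" "A \<noteq> {}"
  shows "Min ((\<lambda>x. c - f x) ` A) = c - Max (f ` A)"
proof (rule Min_eqI)
  show "finite ((\<lambda>x. c - f x) ` A)" using assms(1) by simp
  show "c - Max (f ` A) \<le> y" if "y \<in> (\<lambda>x. c - f x) ` A" for y
    using that assms(1) by (auto intro: diff_left_mono)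
  have "Max (f ` A) \<in> f ` A" using assms by simp
  then show "c - Max (f ` A) \<in> (\<lambda>x. c - f x) ` A" by auto
qed

lemma card_le_one_if_unique: "(\<And>k k'. k \<in> A \<Longrightarrow> k' \<in> A \<Longrightarrow> k = k') \<Longrightarrow> card A \<le> 1"
  by (metis One_nat_def card.infinite card_le_Suc0_iff_eq zero_le)

lemma sum_length_filter_eq_sum_list_card:
  assumes "finite T"
  shows "(\<Sum>k\<in>T. length (filter (\<lambda>p. p k) ps)) = (\<Sum>p\<leftarrow>ps. card {k \<in> T. p k})"
proof (induction ps)
  case (Cons p ps)
  have "(\<Sum>k\<in>T. length (filter (\<lambda>q. q k) (p # ps))) =
        (\<Sum>k\<in>T. of_bool (p k) + length (filter (\<lambda>q. q k) ps))"
    by (rule sum.cong) simp_all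
  also have "\<dots> = card {k \<in> T. p k} + (\<Sum>k\<in>T. length (filter (\<lambda>q. q k) ps))"
    using assms by (simp add: sum.distrib Collect_conj_eq)
  finally show ?case using Cons.IH by simp
qed simp

lemma double_counting_card_le:
  assumes "finite T"
    and "\<And>p. p \<in> set ps \<Longrightarrow> card {k \<in> T. p k} \<le> 1"
    and "\<And>k. k \<in> T \<Longrightarrow> m \<le> length (filter (\<lambda>p. p k) ps)"
  shows "m * card T \<le> length ps"
proof -
  have "m * card T = (\<Sum>k\<in>T. m)" by simp
  also have "\<dots> \<le> (\<Sum>k\<in>T. length (filter (\<lambda>p. p k) ps))"
    by (rule sum_mono) (rule assms(3))
  also have "\<dots> = (\<Sum>p\<leftarrow>ps. card {k \<in> T. p k})"
    using assms(1) by (rule sum_length_filter_eq_sum_list_card)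
  also have "\<dots> \<le> (\<Sum>p\<leftarrow>ps. 1)"
    by (rule sum_list_mono) (rule assms(2))
  finally show ?thesis by (simp add: sum_list_triv)
qed

lemma sorted_perm_inj_on: "sorted_perm g S \<sigma> \<Longrightarrow> inj_on \<sigma> {..<length S}"
  unfolding sorted_perm_def bij_betw_def by blast

lemma sorted_perm_mono:
  "sorted_perm g S \<sigma> \<Longrightarrow> i \<le> j \<Longrightarrow> j < length S \<Longrightarrow> g (S ! \<sigma> i) \<le> g (S ! \<sigma> j)"
  unfolding sorted_perm_def by blast

lemma sorted_perm_less_imp_less:
  "sorted_perm g S \<sigma> \<Longrightarrow> i < length S \<Longrightarrow> g (S ! \<sigma> i) < g (S ! \<sigma> j) \<Longrightarrow> i < j"
  using sorted_perm_mono[of g S \<sigma> j i] by fastforce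

lemma sorted_perm_in_set: "sorted_perm g S \<sigma> \<Longrightarrow> j < length S \<Longrightarrow> S ! \<sigma> j \<in> set S"
  unfolding sorted_perm_def bij_betw_def by (metis image_eqI lessThan_iff nth_mem)

lemma sorted_perm_obtain_position:
  assumes "sorted_perm g S \<sigma>" "k < length S"
  obtains j where "j < length S" "\<sigma> j = k"
  using assms unfolding sorted_perm_def bij_betw_def by (metis image_iff lessThan_iff)

lemma sorted_perm_obtain_position_of:
  assumes "sorted_perm g S \<sigma>" "y \<in> set S"
  obtains j where "j < length S" "S ! \<sigma> j = y"
proof -
  obtain k where "k < length S" "S ! k = y" using assms(2) by (auto simp: in_set_conv_nth)
  with sorted_perm_obtain_position[OF assms(1)] that show ?thesis by metis
qed

lemma sorted_perm_first_eq_Min: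
  fixes h :: "'a \<Rightarrow> int"
  assumes sp: "sorted_perm (\<lambda>x. real_of_int (h x)) S \<sigma>" and "S \<noteq> []"
  shows "h (S ! \<sigma> 0) = Min (h ` set S)"
proof (rule Min_eqI[symmetric])
  show "h (S ! \<sigma> 0) \<le> z" if z: "z \<in> h ` set S" for z
  proof -
    obtain y where "y \<in> set S" "z = h y" using z by blast
    then obtain j where "j < length S" "S ! \<sigma> j = y" using sorted_perm_obtain_position_of[OF sp] by metis
    then show ?thesis using sorted_perm_mono[OF sp, of 0 j] \<open>z = h y\<close> by simp
  qed
qed (use assms sorted_perm_in_set[OF sp, of 0] in auto)

lemma sorted_perm_last_eq_Max:
  fixes h :: "'a \<Rightarrow> int"
  assumes sp: "sorted_perm (\<lambda>x. real_of_int (h x)) S \<sigma>" and "S \<noteq> []"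
  shows "h (S ! \<sigma> (length S - 1)) = Max (h ` set S)"
proof (rule Max_eqI[symmetric])
  show "z \<le> h (S ! \<sigma> (length S - 1))" if z: "z \<in> h ` set S" for z
  proof -
    obtain y where "y \<in> set S" "z = h y" using z by blast
    then obtain j where "j < length S" "S ! \<sigma> j = y" using sorted_perm_obtain_position_of[OF sp] by metis
    then show ?thesis using sorted_perm_mono[OF sp, of j "length S - 1"] \<open>z = h y\<close> by simp
  qed
qed (use assms sorted_perm_in_set[OF sp, of "length S - 1"] in auto)

definition gap_after :: "('a \<Rightarrow> real) \<Rightarrow> 'a list \<Rightarrow> (nat \<Rightarrow> nat) \<Rightarrow> nat \<Rightarrow> bool" where
  "gap_after g S \<sigma> k \<longleftrightarrow> (\<exists>j. Suc j < length S \<and> \<sigma> j = k \<and> g (S ! k) < g (S ! \<sigma> (Suc j)))"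

definition gap_before :: "('a \<Rightarrow> real) \<Rightarrow> 'a list \<Rightarrow> (nat \<Rightarrow> nat) \<Rightarrow> nat \<Rightarrow> bool" where
  "gap_before g S \<sigma> k \<longleftrightarrow> (\<exists>j. 0 < j \<and> j < length S \<and> \<sigma> j = k \<and> g (S ! \<sigma> (j - 1)) < g (S ! k))"

definition crowding_gaps ::
    "('a \<Rightarrow> real) \<Rightarrow> ('a \<Rightarrow> real) \<Rightarrow> 'a list \<Rightarrow> (nat \<Rightarrow> nat) \<Rightarrow> (nat \<Rightarrow> nat) \<Rightarrow> (nat \<Rightarrow> bool) list" where
  "crowding_gaps g1 g2 S \<sigma>1 \<sigma>2 =
     [gap_after g1 S \<sigma>1, gap_before g1 S \<sigma>1, gap_after g2 S \<sigma>2, gap_before g2 S \<sigma>2]"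

lemma gap_after_unique:
  assumes sp: "sorted_perm g S \<sigma>" and "g (S ! k) = g (S ! k')"
    and "gap_after g S \<sigma> k" "gap_after g S \<sigma> k'"
  shows "k = k'"
proof -
  obtain j where j: "Suc j < length S" "\<sigma> j = k" "g (S ! k) < g (S ! \<sigma> (Suc j))"
    using assms(3) unfolding gap_after_def by blast
  obtain j' where j': "Suc j' < length S" "\<sigma> j' = k'" "g (S ! k') < g (S ! \<sigma> (Suc j'))"
    using assms(4) unfolding gap_after_def by blast
  show ?thesis
  proof (cases j j' rule: linorder_cases)
    case less
    then show ?thesis using sorted_perm_mono[OF sp, of "Suc j" j'] j j' assms(2) by simp
  next
    case greater
    then show ?thesis using sorted_perm_mono[OF sp, of "Suc j'" j] j j' assms(2) by simp
  qed (use j j' in simp)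
qed

lemma gap_before_unique:
  assumes sp: "sorted_perm g S \<sigma>" and "g (S ! k) = g (S ! k')"
    and "gap_before g S \<sigma> k" "gap_before g S \<sigma> k'"
  shows "k = k'"
proof -
  obtain j where j: "0 < j" "j < length S" "\<sigma> j = k" "g (S ! \<sigma> (j - 1)) < g (S ! k)"
    using assms(3) unfolding gap_before_def by blast
  obtain j' where j': "0 < j'" "j' < length S" "\<sigma> j' = k'" "g (S ! \<sigma> (j' - 1)) < g (S ! k')"
    using assms(4) unfolding gap_before_def by blast
  show ?thesis
  proof (cases j j' rule: linorder_cases)
    case less
    then have "g (S ! \<sigma> j) \<le> g (S ! \<sigma> (j' - 1))" using sorted_perm_mono[OF sp] j' by simp
    then show ?thesis using j j' assms(2) by simp
  next
    case greater
    then have "g (S ! \<sigma> j') \<le> g (S ! \<sigma> (j - 1))" using sorted_perm_mono[OF sp] j by simp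
    then show ?thesis using j j' assms(2) by simp
  qed (use j j' in simp)
qed

lemma card_gap_after_le_one:
  assumes "sorted_perm g S \<sigma>" and "\<And>k. k \<in> T \<Longrightarrow> g (S ! k) = v"
  shows "card {k \<in> T. gap_after g S \<sigma> k} \<le> 1"
  using gap_after_unique[OF assms(1)] assms(2) by (intro card_le_one_if_unique) auto

lemma card_gap_before_le_one:
  assumes "sorted_perm g S \<sigma>" and "\<And>k. k \<in> T \<Longrightarrow> g (S ! k) = v"
  shows "card {k \<in> T. gap_before g S \<sigma> k} \<le> 1"
  using gap_before_unique[OF assms(1)] assms(2) by (intro card_le_one_if_unique) auto

lemma gap_after_at:
  "inj_on \<sigma> {..<length S} \<Longrightarrow> \<sigma> j = k \<Longrightarrow> Suc j < length S \<Longrightarrow>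
     gap_after g S \<sigma> k \<longleftrightarrow> g (S ! k) < g (S ! \<sigma> (Suc j))"
  unfolding gap_after_def inj_on_def by (metis Suc_lessD lessThan_iff)

lemma gap_before_at:
  "inj_on \<sigma> {..<length S} \<Longrightarrow> \<sigma> j = k \<Longrightarrow> 0 < j \<Longrightarrow> j < length S \<Longrightarrow>
     gap_before g S \<sigma> k \<longleftrightarrow> g (S ! \<sigma> (j - 1)) < g (S ! k)"
  unfolding gap_before_def inj_on_def by (metis lessThan_iff)

lemma cdis_obj_at:
  assumes inj: "inj_on \<sigma> {..<length S}" and "\<sigma> j = k" "0 < j" "Suc j < length S"
  shows "cdis_obj g S \<sigma> k =
    ereal ((g (S ! \<sigma> (Suc j)) - g (S ! \<sigma> (j - 1))) / (g (S ! \<sigma> (length S - 1)) - g (S ! \<sigma> 0)))"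
proof -
  have pos: "i = j" if "i < length S" "\<sigma> i = \<sigma> j" for i
    using inj assms(4) that unfolding inj_on_def by auto
  have "\<sigma> 0 \<noteq> \<sigma> j" using pos[of 0] assms(3,4) by fastforce
  moreover have "\<sigma> (length S - 1) \<noteq> \<sigma> j" using pos[of "length S - 1"] assms(4) by fastforce
  moreover have "{1..<length S - 1} \<inter> {i. \<sigma> i = \<sigma> j} = {j}" using assms(3,4) by (auto intro!: pos)
  ultimately show ?thesis unfolding cdis_obj_def assms(2)[symmetric] by (simp add: sum.If_cases)
qed

lemma cdis_obj_between_unit_neighbours:
  fixes h :: "'a \<Rightarrow> int"
  assumes sp: "sorted_perm (\<lambda>x. real_of_int (h x)) S \<sigma>" and "k < length S"
    and up: "h (S ! k) + 1 \<in> h ` set S" and down: "h (S ! k) - 1 \<in> h ` set S"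
  shows "cdis_obj (\<lambda>x. real_of_int (h x)) S \<sigma> k =
    ereal ((of_bool (gap_after (\<lambda>x. real_of_int (h x)) S \<sigma> k)
            + of_bool (gap_before (\<lambda>x. real_of_int (h x)) S \<sigma> k))
          / (real_of_int (h (S ! \<sigma> (length S - 1))) - real_of_int (h (S ! \<sigma> 0))))"
proof -
  define v where "v = h (S ! k)"
  obtain j where j: "j < length S" "\<sigma> j = k"
    using sorted_perm_obtain_position[OF sp assms(2)] .
  obtain ju where ju: "ju < length S" "h (S ! \<sigma> ju) = v + 1"
    using up sorted_perm_obtain_position_of[OF sp] unfolding v_def by (metis imageE)
  obtain jd where jd: "jd < length S" "h (S ! \<sigma> jd) = v - 1"
    using down sorted_perm_obtain_position_of[OF sp] unfolding v_def by (metis imageE)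
  have "j < ju" using sorted_perm_less_imp_less[OF sp j(1), of ju] j ju v_def by simp
  moreover have "jd < j" using sorted_perm_less_imp_less[OF sp jd(1), of j] j jd v_def by simp
  ultimately have interior: "0 < j" "Suc j < length S" using ju by auto
  have mono: "h (S ! \<sigma> i) \<le> h (S ! \<sigma> i')" if "i \<le> i'" "i' < length S" for i i'
    using sorted_perm_mono[OF sp that] by simp
  have "v \<le> h (S ! \<sigma> (Suc j))" "h (S ! \<sigma> (Suc j)) \<le> v + 1"
    using mono[of j "Suc j"] mono[of "Suc j" ju] \<open>j < ju\<close> interior ju j v_def by auto
  moreover have "v - 1 \<le> h (S ! \<sigma> (j - 1))" "h (S ! \<sigma> (j - 1)) \<le> v"
    using mono[of jd "j - 1"] mono[of "j - 1" j] \<open>jd < j\<close> jd j v_def by auto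
  ultimately have "real_of_int (h (S ! \<sigma> (Suc j))) - real_of_int (h (S ! \<sigma> (j - 1))) =
      of_bool (v < h (S ! \<sigma> (Suc j))) + of_bool (h (S ! \<sigma> (j - 1)) < v)"
    by (cases "v < h (S ! \<sigma> (Suc j))"; cases "h (S ! \<sigma> (j - 1)) < v") auto
  then show ?thesis
    using cdis_obj_at[OF sorted_perm_inj_on[OF sp] j(2) interior]
      gap_after_at[OF sorted_perm_inj_on[OF sp] j(2) interior(2)]
      gap_before_at[OF sorted_perm_inj_on[OF sp] j(2) interior(1) j(1)]
    unfolding v_def j(2) by simp
qed

lemma cDis_between_unit_neighbours:
  fixes h1 h2 :: "'a \<Rightarrow> int"
  defines "g1 \<equiv> \<lambda>x. real_of_int (h1 x)" and "g2 \<equiv> \<lambda>x. real_of_int (h2 x)"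
  assumes sp1: "sorted_perm g1 S \<sigma>1" and sp2: "sorted_perm g2 S \<sigma>2" and k: "k < length S"
    and nb1: "h1 (S ! k) + 1 \<in> h1 ` set S" "h1 (S ! k) - 1 \<in> h1 ` set S"
    and nb2: "h2 (S ! k) + 1 \<in> h2 ` set S" "h2 (S ! k) - 1 \<in> h2 ` set S"
    and spread1: "h1 (S ! \<sigma>1 (length S - 1)) - h1 (S ! \<sigma>1 0) = D"
    and spread2: "h2 (S ! \<sigma>2 (length S - 1)) - h2 (S ! \<sigma>2 0) = D"
  shows "cDis g1 g2 S \<sigma>1 \<sigma>2 k =
    ereal (real (length (filter (\<lambda>p. p k) (crowding_gaps g1 g2 S \<sigma>1 \<sigma>2))) / real_of_int D)"
proof -
  have D: "real_of_int (h1 (S ! \<sigma>1 (length S - 1))) - real_of_int (h1 (S ! \<sigma>1 0)) = real_of_int D"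
    "real_of_int (h2 (S ! \<sigma>2 (length S - 1))) - real_of_int (h2 (S ! \<sigma>2 0)) = real_of_int D"
    using spread1 spread2 by linarith+
  show ?thesis
    using cdis_obj_between_unit_neighbours[OF sp1[unfolded g1_def] k nb1]
      cdis_obj_between_unit_neighbours[OF sp2[unfolded g2_def] k nb2]
    unfolding cDis_def crowding_gaps_def g1_def g2_def D by (simp add: add_divide_distrib)
qed

lemma omm_spread:
  assumes sp1: "sorted_perm (\<lambda>x. real_of_int (fst (omm n x))) S \<sigma>1"
    and sp2: "sorted_perm (\<lambda>x. real_of_int (snd (omm n x))) S \<sigma>2" and "S \<noteq> []"
  shows "fst (omm n (S ! \<sigma>1 (length S - 1))) - fst (omm n (S ! \<sigma>1 0)) = v1max n S - v1min n S"
    and "snd (omm n (S ! \<sigma>2 (length S - 1))) - snd (omm n (S ! \<sigma>2 0)) = v1max n S - v1min n S"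
proof -
  show "fst (omm n (S ! \<sigma>1 (length S - 1))) - fst (omm n (S ! \<sigma>1 0)) = v1max n S - v1min n S"
    using sorted_perm_first_eq_Min[OF sp1 \<open>S \<noteq> []\<close>] sorted_perm_last_eq_Max[OF sp1 \<open>S \<noteq> []\<close>]
    unfolding v1max_def v1min_def by simp
  have snd_omm: "(\<lambda>x. snd (omm n x)) = (\<lambda>x. int n - fst (omm n x))"
    unfolding omm_def by simp
  show "snd (omm n (S ! \<sigma>2 (length S - 1))) - snd (omm n (S ! \<sigma>2 0)) = v1max n S - v1min n S"
    using sorted_perm_first_eq_Min[OF sp2 \<open>S \<noteq> []\<close>] sorted_perm_last_eq_Max[OF sp2 \<open>S \<noteq> []\<close>]
      Max_image_diff_left[of "set S" "int n" "\<lambda>x. fst (omm n x)"]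
      Min_image_diff_left[of "set S" "int n" "\<lambda>x. fst (omm n x)"] \<open>S \<noteq> []\<close>
    unfolding v1max_def v1min_def snd_omm by simp
qed

theorem lemma4:
  fixes n N :: nat and P Q :: "bool list list" and \<sigma>1 \<sigma>2 :: "nat \<Rightarrow> nat"
    and v1 v2 :: int
  assumes "length P = N" and "length Q = N"
    and "\<forall>x \<in> set (P @ Q). length x = n"
    and "sorted_perm (\<lambda>x. real_of_int (fst (omm n x))) (P @ Q) \<sigma>1"
    and "sorted_perm (\<lambda>x. real_of_int (snd (omm n x))) (P @ Q) \<sigma>2"
    and "v1max n (P @ Q) > v1min n (P @ Q)"
    and "(v1, v2) \<in> Vin_plus n (P @ Q) \<inter> Vin_minus n (P @ Q)"
  shows "card {k. k < length (P @ Q) \<and> omm n ((P @ Q) ! k) = (v1, v2) \<and>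
           cDis (\<lambda>x. real_of_int (fst (omm n x))) (\<lambda>x. real_of_int (snd (omm n x)))
                (P @ Q) \<sigma>1 \<sigma>2 k
             \<ge> ereal (2 / real_of_int (v1max n (P @ Q) - v1min n (P @ Q)))} \<le> 2"
proof -
  let ?S = "P @ Q" and ?D = "v1max n (P @ Q) - v1min n (P @ Q)"
  let ?gaps = "crowding_gaps (\<lambda>x. real_of_int (fst (omm n x))) (\<lambda>x. real_of_int (snd (omm n x)))
                 ?S \<sigma>1 \<sigma>2"
  define T where "T = {k. k < length ?S \<and> omm n (?S ! k) = (v1, v2) \<and>
    cDis (\<lambda>x. real_of_int (fst (omm n x))) (\<lambda>x. real_of_int (snd (omm n x))) ?S \<sigma>1 \<sigma>2 k
      \<ge> ereal (2 / real_of_int ?D)}"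
  obtain y y' where "y \<in> set ?S" "omm n y = (v1 + 1, v2 - 1)" "y' \<in> set ?S" "omm n y' = (v1 - 1, v2 + 1)"
    using assms(7) unfolding Vin_plus_def Vin_minus_def by auto
  then have nb: "v1 + 1 \<in> (\<lambda>x. fst (omm n x)) ` set ?S" "v1 - 1 \<in> (\<lambda>x. fst (omm n x)) ` set ?S"
      "v2 + 1 \<in> (\<lambda>x. snd (omm n x)) ` set ?S" "v2 - 1 \<in> (\<lambda>x. snd (omm n x)) ` set ?S"
      and "?S \<noteq> []"
    by (force simp: image_iff)+
  note spread = omm_spread[OF assms(4,5) \<open>?S \<noteq> []\<close>]
  have "2 \<le> length (filter (\<lambda>p. p k) ?gaps)" if "k \<in> T" for k
  proof -
    have "ereal (2 / real_of_int ?D) \<le> ereal (real (length (filter (\<lambda>p. p k) ?gaps)) / real_of_int ?D)"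
      using that cDis_between_unit_neighbours[OF assms(4,5) _ _ _ _ _ spread] nb
      unfolding T_def by auto
    then show ?thesis using assms(6) by (simp add: divide_le_cancel)
  qed
  moreover have "card {k \<in> T. p k} \<le> 1" if "p \<in> set ?gaps" for p
    using that card_gap_after_le_one[OF assms(4), of T v1] card_gap_before_le_one[OF assms(4), of T v1]
      card_gap_after_le_one[OF assms(5), of T v2] card_gap_before_le_one[OF assms(5), of T v2]
    unfolding crowding_gaps_def T_def by auto
  moreover have "finite T" unfolding T_def by simp
  ultimately have "2 * card T \<le> length ?gaps" by (intro double_counting_card_le)
  then show ?thesis unfolding T_def crowding_gaps_def by simp
qed

end
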